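(* Let $\eta\in\mathbb{R}$ with $\eta^2<2$, $h>0$, $x_0\in\mathbb{R}$, and let $(\Delta W_n)_{n\ge0}$ be i.i.d. $\mathcal{N}(0,h)$ random variables. For $f(x)=-x$, $g(x)=1+\eta x$ and $F(x)=f(x)-\tfrac12g'(x)g(x)$, define the stochastic Heun iterates $$x_{n+1}=x_n+\tfrac12(F_1+F_2)h+\tfrac12(G_1+G_2)\Delta W_n,$$ where $F_1=F(x_n)$, $G_1=g(x_n)$, $F_2=F(x_n+F_1h+G_1\Delta W_n)$, $G_2=g(x_n+F_1h+G_1\Delta W_n)$, starting from the deterministic value $x_0$, and let $\mu^{(2)}_n=\mathbb{E}[x_n^2]$. Suppose $0<h<\frac{8}{(2+\eta^2)^2}$ and $$\Big|1-h(2-\eta^2)-\tfrac14h^2\big((2+\eta^2)^2-12\big)+\tfrac14h^3(\eta^6+3\eta^4-4)+\tfrac1{64}h^4(2+\eta^2)^4\Big|<1.$$ Then $\mu^{(2)}_n$ converges as $n\to\infty$ to a limit $\mu^{(2)}_\infty(h)$ (independent of $x_0$), and $\mu^{(2)}_\infty(h)=\frac{1}{2-\eta^2}+O(h)$ as $h\to0$.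
   Context: Here $\Delta W_n$ is independent of $x_0,\dots,x_n$. *)

theory Defs
  imports "HOL-Probability.Probability"
begin

definition heun_f :: "real \<Rightarrow> real" where
  "heun_f x = - x"

definition heun_g :: "real \<Rightarrow> real \<Rightarrow> real" where
  "heun_g \<eta> x = 1 + \<eta> * x"

definition heun_g' :: "real \<Rightarrow> real \<Rightarrow> real" where
  "heun_g' \<eta> x = \<eta>"

definition heun_F :: "real \<Rightarrow> real \<Rightarrow> real" where
  "heun_F \<eta> x = heun_f x - (1/2) * heun_g' \<eta> x * heun_g \<eta> x"

definition heun_step :: "real \<Rightarrow> real \<Rightarrow> real \<Rightarrow> real \<Rightarrow> real" where
  "heun_step \<eta> h x dW =
     (let F1 = heun_F \<eta> x; G1 = heun_g \<eta> x;
          y = x + F1 * h + G1 * dW;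
          F2 = heun_F \<eta> y; G2 = heun_g \<eta> y
      in x + (1/2) * (F1 + F2) * h + (1/2) * (G1 + G2) * dW)"

primrec heun_iter :: "real \<Rightarrow> real \<Rightarrow> real \<Rightarrow> (nat \<Rightarrow> 'a \<Rightarrow> real) \<Rightarrow> nat \<Rightarrow> 'a \<Rightarrow> real" where
  "heun_iter \<eta> h x0 dW 0 \<omega> = x0"
| "heun_iter \<eta> h x0 dW (Suc n) \<omega> = heun_step \<eta> h (heun_iter \<eta> h x0 dW n \<omega>) (dW n \<omega>)"

definition iid_gaussian_increments :: "'a measure \<Rightarrow> real \<Rightarrow> (nat \<Rightarrow> 'a \<Rightarrow> real) \<Rightarrow> bool" where
  "iid_gaussian_increments M h dW \<longleftrightarrow>
     prob_space M \<and>
     prob_space.indep_vars M (\<lambda>_. borel) dW UNIV \<and>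
     (\<forall>n. distributed M lborel (dW n) (\<lambda>x. ennreal (normal_density 0 (sqrt h) x)))"

definition heun_mu2 :: "'a measure \<Rightarrow> real \<Rightarrow> real \<Rightarrow> real \<Rightarrow> (nat \<Rightarrow> 'a \<Rightarrow> real) \<Rightarrow> nat \<Rightarrow> real" where
  "heun_mu2 M \<eta> h x0 dW n = prob_space.expectation M (\<lambda>\<omega>. (heun_iter \<eta> h x0 dW n \<omega>)\<^sup>2)"

definition heun_admissible :: "real \<Rightarrow> real \<Rightarrow> bool" where
  "heun_admissible \<eta> h \<longleftrightarrow>
     0 < h \<and> h < 8 / (2 + \<eta>\<^sup>2)\<^sup>2 \<and>
     \<bar>1 - h * (2 - \<eta>\<^sup>2) - (1/4) * h\<^sup>2 * ((2 + \<eta>\<^sup>2)\<^sup>2 - 12)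
        + (1/4) * h ^ 3 * (\<eta> ^ 6 + 3 * \<eta> ^ 4 - 4) + (1/64) * h ^ 4 * (2 + \<eta>\<^sup>2) ^ 4\<bar> < 1"

end

theory Submission
  imports Defs
begin

text \<open>Writing \<open>z = \<eta> \<Delta>W - (1 + \<eta>\<^sup>2/2) h\<close>, one Heun step is the random affine map
  \<open>x \<mapsto> A x + B\<close> with \<open>A = 1 + z + z\<^sup>2/2\<close> and \<open>B = (1 + z/2)(\<Delta>W - \<eta> h/2)\<close>, whose coefficients
  are quadratic polynomials in the increment \<open>\<Delta>W\<close> and independent of \<open>x\<^sub>n\<close>. The Gaussian
  moments up to order four therefore close the first two moments into the linear recurrences
  \<open>\<mu>\<^sub>1' = E[A] \<mu>\<^sub>1 + E[B]\<close> and \<open>\<mu>\<^sub>2' = E[A\<^sup>2] \<mu>\<^sub>2 + 2 E[AB] \<mu>\<^sub>1 + E[B\<^sup>2]\<close>. The step-size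
  hypotheses say precisely \<open>|E[A]| < 1\<close> and \<open>|E[A\<^sup>2]| < 1\<close>, so both moments converge. In the
  fixed point a common factor \<open>h\<close> cancels, leaving a rational function of \<open>h\<close> that is
  differentiable at \<open>h = 0\<close> with value \<open>1/(2 - \<eta>\<^sup>2)\<close>.\<close>

lemma perturbed_contraction_tendsto_zero:
  fixes e d :: "nat \<Rightarrow> real"
  assumes r: "\<bar>r\<bar> < 1" and d: "d \<longlonglongrightarrow> 0" and rec: "\<And>n. e (Suc n) = r * e n + d n"
  shows "e \<longlonglongrightarrow> 0"
proof (rule LIMSEQ_I)
  fix \<epsilon> :: real assume "0 < \<epsilon>"
  define q where "q = \<bar>r\<bar>"
  have q: "0 \<le> q" "q < 1" using r by (auto simp: q_def)
  obtain N where N: "\<And>n. n \<ge> N \<Longrightarrow> \<bar>d n\<bar> < \<epsilon> * (1 - q) / 2"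
    using LIMSEQ_D[OF d, of "\<epsilon> * (1 - q) / 2"] \<open>0 < \<epsilon>\<close> q by auto
  have bound: "\<bar>e (N + k)\<bar> \<le> q ^ k * \<bar>e N\<bar> + \<epsilon> / 2" for k
  proof (induction k)
    case 0
    show ?case using \<open>0 < \<epsilon>\<close> by simp
  next
    case (Suc k)
    have "\<bar>e (N + Suc k)\<bar> \<le> q * \<bar>e (N + k)\<bar> + \<bar>d (N + k)\<bar>"
      by (simp add: rec q_def abs_mult[symmetric] abs_triangle_ineq)
    also have "\<dots> \<le> q * (q ^ k * \<bar>e N\<bar> + \<epsilon> / 2) + \<epsilon> * (1 - q) / 2"
      using Suc.IH N[of "N + k"] q(1) by (intro add_mono mult_left_mono) auto
    finally show ?case by (simp add: field_simps)
  qed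
  obtain K where K: "\<And>k. k \<ge> K \<Longrightarrow> q ^ k * \<bar>e N\<bar> < \<epsilon> / 2"
    using LIMSEQ_D[OF tendsto_mult_left_zero[OF LIMSEQ_power_zero[of q]], of "\<epsilon> / 2" "\<bar>e N\<bar>"]
      q \<open>0 < \<epsilon>\<close> by auto
  have "\<bar>e n\<bar> < \<epsilon>" if "n \<ge> N + K" for n
    using bound[of "n - N"] K[of "n - N"] that by fastforce
  then show "\<exists>n0. \<forall>n\<ge>n0. norm (e n - 0) < \<epsilon>" by auto
qed

lemma affine_recurrence_tendsto:
  fixes u s :: "nat \<Rightarrow> real"
  assumes r: "\<bar>r\<bar> < 1" and s: "s \<longlonglongrightarrow> t" and rec: "\<And>n. u (Suc n) = r * u n + s n"
  shows "u \<longlonglongrightarrow> t / (1 - r)"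
proof -
  have "r \<noteq> 1" using r by auto
  have "(\<lambda>n. u n - t / (1 - r)) \<longlonglongrightarrow> 0"
  proof (rule perturbed_contraction_tendsto_zero[OF r])
    show "(\<lambda>n. s n - t) \<longlonglongrightarrow> 0" using s by (simp add: LIM_zero)
    show "u (Suc n) - t / (1 - r) = r * (u n - t / (1 - r)) + (s n - t)" for n
      using \<open>r \<noteq> 1\<close> by (simp add: rec field_simps)
  qed
  then show ?thesis by (simp add: LIM_zero_iff)
qed

lemma (in prob_space) centered_normal_moments:
  assumes D: "distributed M lborel W (normal_density 0 \<sigma>)" and \<sigma>: "0 < \<sigma>"
  shows integrable_centered_normal_power: "integrable M (\<lambda>\<omega>. W \<omega> ^ k)"
    and "expectation W = 0"
    and "expectation (\<lambda>\<omega>. W \<omega> ^ 2) = \<sigma>\<^sup>2"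
    and "expectation (\<lambda>\<omega>. W \<omega> ^ 3) = 0"
    and "expectation (\<lambda>\<omega>. W \<omega> ^ 4) = 3 * \<sigma> ^ 4"
proof -
  have moment: "expectation (\<lambda>\<omega>. W \<omega> ^ k) = (\<integral>x. normal_density 0 \<sigma> x * x ^ k \<partial>lborel)" for k
    using distributed_integral[OF D, of "\<lambda>x. x ^ k"] by simp
  show "integrable M (\<lambda>\<omega>. W \<omega> ^ k)"
    using distributed_integrable[OF D, of "\<lambda>x. x ^ k"]
      integrable_normal_moment[OF \<sigma>, where k=k and \<mu>=0] by simp
  show "expectation W = 0"
    using moment[of 1] integral_normal_moment_odd[OF \<sigma>, where k=0 and \<mu>=0] by simp
  show "expectation (\<lambda>\<omega>. W \<omega> ^ 3) = 0"
    using moment[of 3] integral_normal_moment_odd[OF \<sigma>, where k=1 and \<mu>=0] by simp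
  show "expectation (\<lambda>\<omega>. W \<omega> ^ 2) = \<sigma>\<^sup>2"
    using moment[of 2] integral_normal_moment_even[OF \<sigma>, where k=1 and \<mu>=0] by simp
  show "expectation (\<lambda>\<omega>. W \<omega> ^ 4) = 3 * \<sigma> ^ 4"
    using moment[of 4] integral_normal_moment_even[OF \<sigma>, where k=2 and \<mu>=0] \<sigma>
    by (simp add: fact_numeral field_simps)
qed

lemma (in prob_space) centered_normal_quartic_moment:
  fixes c0 c1 c2 c3 c4 :: real
  assumes D: "distributed M lborel W (normal_density 0 \<sigma>)" and \<sigma>: "0 < \<sigma>"
  defines "p \<equiv> \<lambda>w. c0 + c1 * w + c2 * w ^ 2 + c3 * w ^ 3 + c4 * w ^ 4"
  shows "integrable M (\<lambda>\<omega>. p (W \<omega>))"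
    and "expectation (\<lambda>\<omega>. p (W \<omega>)) = c0 + c2 * \<sigma>\<^sup>2 + 3 * c4 * \<sigma> ^ 4"
proof -
  note power = integrable_centered_normal_power[OF D \<sigma>]
  have W: "integrable M W" using power[of 1] by simp
  show "integrable M (\<lambda>\<omega>. p (W \<omega>))"
    unfolding p_def using power W by (intro Bochner_Integration.integrable_add integrable_mult_right) auto
  show "expectation (\<lambda>\<omega>. p (W \<omega>)) = c0 + c2 * \<sigma>\<^sup>2 + 3 * c4 * \<sigma> ^ 4"
    unfolding p_def using power W centered_normal_moments[OF D \<sigma>] by (simp add: prob_space)
qed

lemma (in prob_space) centered_normal_quadratic_product_moment:
  fixes p q :: "real \<Rightarrow> real"
  assumes D: "distributed M lborel W (normal_density 0 \<sigma>)" and \<sigma>: "0 < \<sigma>"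
    and p: "\<And>w. p w = a0 + a1 * w + a2 * w\<^sup>2" and q: "\<And>w. q w = b0 + b1 * w + b2 * w\<^sup>2"
  shows "integrable M (\<lambda>\<omega>. p (W \<omega>) * q (W \<omega>))"
    and "expectation (\<lambda>\<omega>. p (W \<omega>) * q (W \<omega>))
           = a0 * b0 + (a0 * b2 + a1 * b1 + a2 * b0) * \<sigma>\<^sup>2 + 3 * a2 * b2 * \<sigma> ^ 4"
proof -
  have expand: "p w * q w = a0 * b0 + (a0 * b1 + a1 * b0) * w + (a0 * b2 + a1 * b1 + a2 * b0) * w ^ 2
                             + (a1 * b2 + a2 * b1) * w ^ 3 + a2 * b2 * w ^ 4" for w
    unfolding p q by algebra
  show "integrable M (\<lambda>\<omega>. p (W \<omega>) * q (W \<omega>))" "expectation (\<lambda>\<omega>. p (W \<omega>) * q (W \<omega>))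
           = a0 * b0 + (a0 * b2 + a1 * b1 + a2 * b0) * \<sigma>\<^sup>2 + 3 * a2 * b2 * \<sigma> ^ 4"
    unfolding expand using centered_normal_quartic_moment[OF D \<sigma>] by simp_all
qed

lemma (in prob_space) random_affine_map_moments:
  fixes X W :: "'a \<Rightarrow> real" and a b :: "real \<Rightarrow> real"
  assumes indep: "indep_var borel X borel W"
    and meas: "a \<in> borel_measurable borel" "b \<in> borel_measurable borel"
    and X: "integrable M X" "integrable M (\<lambda>\<omega>. X \<omega> ^ 2)"
    and W: "integrable M (\<lambda>\<omega>. a (W \<omega>))" "integrable M (\<lambda>\<omega>. b (W \<omega>))"
      "integrable M (\<lambda>\<omega>. a (W \<omega>) ^ 2)" "integrable M (\<lambda>\<omega>. a (W \<omega>) * b (W \<omega>))"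
      "integrable M (\<lambda>\<omega>. b (W \<omega>) ^ 2)"
  defines "Y \<equiv> \<lambda>\<omega>. a (W \<omega>) * X \<omega> + b (W \<omega>)"
  shows "integrable M Y" "integrable M (\<lambda>\<omega>. Y \<omega> ^ 2)"
    and "expectation Y = expectation (\<lambda>\<omega>. a (W \<omega>)) * expectation X + expectation (\<lambda>\<omega>. b (W \<omega>))"
    and "expectation (\<lambda>\<omega>. Y \<omega> ^ 2)
           = expectation (\<lambda>\<omega>. a (W \<omega>) ^ 2) * expectation (\<lambda>\<omega>. X \<omega> ^ 2)
             + 2 * expectation (\<lambda>\<omega>. a (W \<omega>) * b (W \<omega>)) * expectation X
             + expectation (\<lambda>\<omega>. b (W \<omega>) ^ 2)"
proof -
  have indep_comp: "indep_var borel (\<lambda>\<omega>. \<phi> (X \<omega>)) borel (\<lambda>\<omega>. \<psi> (W \<omega>))"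
    if "\<phi> \<in> borel_measurable borel" "\<psi> \<in> borel_measurable borel" for \<phi> \<psi> :: "real \<Rightarrow> real"
    using indep_var_compose[OF indep that] by (simp add: comp_def)
  have indep_a: "indep_var borel X borel (\<lambda>\<omega>. a (W \<omega>))"
    using indep_comp[of "\<lambda>x. x" a] meas by simp
  have indep_a2: "indep_var borel (\<lambda>\<omega>. X \<omega> ^ 2) borel (\<lambda>\<omega>. a (W \<omega>) ^ 2)"
    using indep_comp[of "\<lambda>x. x ^ 2" "\<lambda>w. a w ^ 2"] meas by simp
  have indep_ab: "indep_var borel X borel (\<lambda>\<omega>. a (W \<omega>) * b (W \<omega>))"
    using indep_comp[of "\<lambda>x. x" "\<lambda>w. a w * b w"] meas by simp
  note int = indep_var_integrable[OF indep_a X(1) W(1)] indep_var_integrable[OF indep_a2 X(2) W(3)]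
    indep_var_integrable[OF indep_ab X(1) W(4)]
  note mult = indep_var_lebesgue_integral[OF indep_a X(1) W(1)]
    indep_var_lebesgue_integral[OF indep_a2 X(2) W(3)] indep_var_lebesgue_integral[OF indep_ab X(1) W(4)]
  have linear: "Y = (\<lambda>\<omega>. X \<omega> * a (W \<omega>) + b (W \<omega>))"
    by (rule ext) (simp add: Y_def mult.commute)
  have square: "(\<lambda>\<omega>. Y \<omega> ^ 2) = (\<lambda>\<omega>. X \<omega> ^ 2 * a (W \<omega>) ^ 2 + 2 * (X \<omega> * (a (W \<omega>) * b (W \<omega>)))
                                     + b (W \<omega>) ^ 2)"
    by (rule ext) (simp add: Y_def power2_eq_square algebra_simps)
  show "integrable M Y" "expectation Y
          = expectation (\<lambda>\<omega>. a (W \<omega>)) * expectation X + expectation (\<lambda>\<omega>. b (W \<omega>))"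
    unfolding linear using int mult W by simp_all
  show "integrable M (\<lambda>\<omega>. Y \<omega> ^ 2)" "expectation (\<lambda>\<omega>. Y \<omega> ^ 2)
           = expectation (\<lambda>\<omega>. a (W \<omega>) ^ 2) * expectation (\<lambda>\<omega>. X \<omega> ^ 2)
             + 2 * expectation (\<lambda>\<omega>. a (W \<omega>) * b (W \<omega>)) * expectation X
             + expectation (\<lambda>\<omega>. b (W \<omega>) ^ 2)"
    unfolding square using int mult W by simp_all
qed

text \<open>\<open>heun_A\<close> is the second-order Taylor polynomial of \<open>exp z\<close>, the factor by which the exact
  flow of the linear test equation multiplies \<open>x\<close> over one step.\<close>

definition heun_A :: "real \<Rightarrow> real \<Rightarrow> real \<Rightarrow> real" where
  "heun_A \<eta> h w = (let z = \<eta> * w - (1 + \<eta>\<^sup>2 / 2) * h in 1 + z + z\<^sup>2 / 2)"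

definition heun_B :: "real \<Rightarrow> real \<Rightarrow> real \<Rightarrow> real" where
  "heun_B \<eta> h w = (let z = \<eta> * w - (1 + \<eta>\<^sup>2 / 2) * h in (1 + z / 2) * (w - \<eta> * h / 2))"

lemma heun_step_affine: "heun_step \<eta> h x w = heun_A \<eta> h w * x + heun_B \<eta> h w"
  unfolding heun_step_def heun_A_def heun_B_def heun_F_def heun_f_def heun_g_def heun_g'_def Let_def
  by (simp add: field_simps power2_eq_square)

lemma heun_A_quadratic:
  "heun_A \<eta> h w = (1 - (1 + \<eta>\<^sup>2 / 2) * h + (1 + \<eta>\<^sup>2 / 2)\<^sup>2 * h\<^sup>2 / 2)
                   + \<eta> * (1 - (1 + \<eta>\<^sup>2 / 2) * h) * w + \<eta>\<^sup>2 / 2 * w\<^sup>2"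
  unfolding heun_A_def Let_def by (simp add: power2_eq_square field_simps)

lemma heun_B_quadratic:
  "heun_B \<eta> h w = - \<eta> * h / 2 * (1 - (1 + \<eta>\<^sup>2 / 2) * h / 2)
                   + (1 - h / 2 - \<eta>\<^sup>2 * h / 2) * w + \<eta> / 2 * w\<^sup>2"
  unfolding heun_B_def Let_def by (simp add: power2_eq_square field_simps)

definition heun_mean_rate :: "real \<Rightarrow> real \<Rightarrow> real" where
  "heun_mean_rate \<eta> h = 1 - (2 + \<eta>\<^sup>2)\<^sup>2 * h / 8"

definition heun_square_rate :: "real \<Rightarrow> real \<Rightarrow> real" where
  "heun_square_rate \<eta> h = 2 - \<eta>\<^sup>2 + ((2 + \<eta>\<^sup>2)\<^sup>2 - 12) * h / 4
     - (\<eta> ^ 6 + 3 * \<eta> ^ 4 - 4) * h\<^sup>2 / 4 - (2 + \<eta>\<^sup>2) ^ 4 * h ^ 3 / 64"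

definition heun_cross_rate :: "real \<Rightarrow> real \<Rightarrow> real" where
  "heun_cross_rate \<eta> h = \<eta> * (2 - (10 + 3 * \<eta>\<^sup>2) * h / 4 + (2 + \<eta>\<^sup>2) * (1 + 2 * \<eta>\<^sup>2) * h\<^sup>2 / 4
     + (2 + \<eta>\<^sup>2) ^ 3 * h ^ 3 / 32)"

definition heun_noise_rate :: "real \<Rightarrow> real \<Rightarrow> real" where
  "heun_noise_rate \<eta> h = 1 - (2 + \<eta>\<^sup>2) * h / 2 + (1 + \<eta>\<^sup>2)\<^sup>2 * h\<^sup>2 / 4
     + \<eta>\<^sup>2 * (2 + \<eta>\<^sup>2)\<^sup>2 * h ^ 3 / 64"

lemma (in prob_space) heun_increment_moments:
  fixes \<eta> :: real
  assumes D: "distributed M lborel W (normal_density 0 (sqrt h))" and h: "0 < h"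
  defines "A \<equiv> \<lambda>\<omega>. heun_A \<eta> h (W \<omega>)" and "B \<equiv> \<lambda>\<omega>. heun_B \<eta> h (W \<omega>)"
  shows "integrable M A" "integrable M B" "integrable M (\<lambda>\<omega>. A \<omega> ^ 2)"
    "integrable M (\<lambda>\<omega>. A \<omega> * B \<omega>)" "integrable M (\<lambda>\<omega>. B \<omega> ^ 2)"
    and "expectation A = 1 - h * heun_mean_rate \<eta> h"
    and "expectation B = \<eta> * (2 + \<eta>\<^sup>2) * h\<^sup>2 / 8"
    and "expectation (\<lambda>\<omega>. A \<omega> ^ 2) = 1 - h * heun_square_rate \<eta> h"
    and "2 * expectation (\<lambda>\<omega>. A \<omega> * B \<omega>) = h * heun_cross_rate \<eta> h"
    and "expectation (\<lambda>\<omega>. B \<omega> ^ 2) = h * heun_noise_rate \<eta> h"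
proof -
  have \<sigma>: "0 < sqrt h" and \<sigma>2: "sqrt h ^ 2 = h" using h by simp_all
  have "sqrt h ^ 4 = (sqrt h ^ 2) ^ 2" by (simp flip: power_mult)
  then have \<sigma>4: "sqrt h ^ 4 = h\<^sup>2" unfolding \<sigma>2 .
  have one: "(\<lambda>_. 1) w = 1 + 0 * w + 0 * w\<^sup>2" for w :: real by simp
  note product = centered_normal_quadratic_product_moment[OF D \<sigma>]
  note AA = product[OF heun_A_quadratic heun_A_quadratic, of \<eta> h \<eta> h]
  note AB = product[OF heun_A_quadratic heun_B_quadratic, of \<eta> h \<eta> h]
  note BB = product[OF heun_B_quadratic heun_B_quadratic, of \<eta> h \<eta> h]
  note A1 = product[OF heun_A_quadratic one, of \<eta> h]
  note B1 = product[OF heun_B_quadratic one, of \<eta> h]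
  show "integrable M A" "integrable M B" "integrable M (\<lambda>\<omega>. A \<omega> ^ 2)"
    "integrable M (\<lambda>\<omega>. A \<omega> * B \<omega>)" "integrable M (\<lambda>\<omega>. B \<omega> ^ 2)"
    using AA(1) AB(1) BB(1) A1(1) B1(1) by (simp_all add: A_def B_def power2_eq_square)
  show "expectation A = 1 - h * heun_mean_rate \<eta> h"
    using A1(2) unfolding A_def \<sigma>2 \<sigma>4 heun_mean_rate_def by (simp add: field_simps power2_eq_square)
  show "expectation B = \<eta> * (2 + \<eta>\<^sup>2) * h\<^sup>2 / 8"
    using B1(2) unfolding B_def \<sigma>2 \<sigma>4 by (simp add: field_simps power2_eq_square)
  show "expectation (\<lambda>\<omega>. A \<omega> ^ 2) = 1 - h * heun_square_rate \<eta> h"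
    unfolding A_def power2_eq_square[of "heun_A _ _ _"] AA(2) \<sigma>2 \<sigma>4 heun_square_rate_def
    by (simp add: field_simps power2_eq_square; algebra)
  show "2 * expectation (\<lambda>\<omega>. A \<omega> * B \<omega>) = h * heun_cross_rate \<eta> h"
    unfolding A_def B_def AB(2) \<sigma>2 \<sigma>4 heun_cross_rate_def
    by (simp add: field_simps power2_eq_square; algebra)
  show "expectation (\<lambda>\<omega>. B \<omega> ^ 2) = h * heun_noise_rate \<eta> h"
    unfolding B_def power2_eq_square[of "heun_B _ _ _"] BB(2) \<sigma>2 \<sigma>4 heun_noise_rate_def
    by (simp add: field_simps power2_eq_square; algebra)
qed

lemma borel_measurable_heun_A [measurable]: "heun_A \<eta> h \<in> borel_measurable borel"
  unfolding heun_A_def[abs_def] Let_def by measurable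

lemma borel_measurable_heun_B [measurable]: "heun_B \<eta> h \<in> borel_measurable borel"
  unfolding heun_B_def[abs_def] Let_def by measurable

lemma measurable_heun_iter_coordinates:
  "n \<le> m \<Longrightarrow>
    (\<lambda>f. heun_iter \<eta> h x0 (\<lambda>i f. f i) n f) \<in> borel_measurable (PiM {..<m} (\<lambda>_. borel))"
proof (induction n)
  case 0
  have "heun_iter \<eta> h x0 (\<lambda>i f. f i) 0 = (\<lambda>_. x0)" by (rule ext) simp
  then show ?case by simp
next
  case (Suc n)
  have "(\<lambda>f. f n) \<in> borel_measurable (PiM {..<m} (\<lambda>_. borel))"
    using Suc.prems by (intro measurable_component_singleton) auto
  with Suc show ?case by (simp add: heun_step_affine)
qed

lemma heun_iter_restrict:
  "n \<le> m \<Longrightarrow>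
    heun_iter \<eta> h x0 dW n \<omega> = heun_iter \<eta> h x0 (\<lambda>i f. f i) n (restrict (\<lambda>i. dW i \<omega>) {..<m})"
  by (induction n) auto

lemma (in prob_space) indep_var_heun_iter_increment:
  assumes "indep_vars (\<lambda>_. borel) dW UNIV"
  shows "indep_var borel (heun_iter \<eta> h x0 dW n) borel (dW n)"
proof -
  have "indep_var (PiM {..<n} (\<lambda>_. borel)) (\<lambda>\<omega>. restrict (\<lambda>i. dW i \<omega>) {..<n})
          (PiM {n} (\<lambda>_. borel)) (\<lambda>\<omega>. restrict (\<lambda>i. dW i \<omega>) {n})"
    by (rule indep_var_restrict[OF assms]) auto
  from indep_var_compose[OF this measurable_heun_iter_coordinates[OF order_refl]
      measurable_component_singleton[of n "{n}"]]
  show ?thesis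
    by (simp add: comp_def heun_iter_restrict[of n n _ _ _ dW, symmetric])
qed

lemma (in prob_space) heun_moment_recurrences:
  fixes \<eta> x0 :: real
  assumes ind: "indep_vars (\<lambda>_. borel) dW UNIV"
    and D: "\<And>n. distributed M lborel (dW n) (normal_density 0 (sqrt h))" and h: "0 < h"
  defines "X \<equiv> heun_iter \<eta> h x0 dW"
  shows "expectation (X (Suc n))
           = (1 - h * heun_mean_rate \<eta> h) * expectation (X n) + \<eta> * (2 + \<eta>\<^sup>2) * h\<^sup>2 / 8"
    and "expectation (\<lambda>\<omega>. X (Suc n) \<omega> ^ 2)
           = (1 - h * heun_square_rate \<eta> h) * expectation (\<lambda>\<omega>. X n \<omega> ^ 2)
             + h * heun_cross_rate \<eta> h * expectation (X n) + h * heun_noise_rate \<eta> h"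
proof -
  have step: "X (Suc n) = (\<lambda>\<omega>. heun_A \<eta> h (dW n \<omega>) * X n \<omega> + heun_B \<eta> h (dW n \<omega>))" for n
    by (rule ext) (simp add: X_def heun_step_affine)
  note increment = heun_increment_moments[OF D h, where \<eta>=\<eta>]
  note affine = random_affine_map_moments[OF indep_var_heun_iter_increment[OF ind, of \<eta> h x0]
      borel_measurable_heun_A borel_measurable_heun_B _ _ increment(1-5), folded X_def]
  have integrable: "integrable M (X n) \<and> integrable M (\<lambda>\<omega>. X n \<omega> ^ 2)" for n
  proof (induction n)
    case (Suc n)
    then show ?case unfolding step using affine(1,2) by blast
  qed (simp add: X_def)
  show "expectation (X (Suc n))
          = (1 - h * heun_mean_rate \<eta> h) * expectation (X n) + \<eta> * (2 + \<eta>\<^sup>2) * h\<^sup>2 / 8"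
    unfolding step using affine(3) integrable increment(6,7) by simp
  show "expectation (\<lambda>\<omega>. X (Suc n) \<omega> ^ 2)
          = (1 - h * heun_square_rate \<eta> h) * expectation (\<lambda>\<omega>. X n \<omega> ^ 2)
            + h * heun_cross_rate \<eta> h * expectation (X n) + h * heun_noise_rate \<eta> h"
    unfolding step using affine(4) integrable increment(8-10) by simp
qed

text \<open>Fixed points of the moment recurrences, with the common factor \<open>h\<close> cancelled so that
  they stay regular at \<open>h = 0\<close>.\<close>

definition heun_mu1_limit :: "real \<Rightarrow> real \<Rightarrow> real" where
  "heun_mu1_limit \<eta> h = \<eta> * (2 + \<eta>\<^sup>2) * h / (8 * heun_mean_rate \<eta> h)"

definition heun_mu2_limit :: "real \<Rightarrow> real \<Rightarrow> real" where
  "heun_mu2_limit \<eta> h =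
     (heun_cross_rate \<eta> h * heun_mu1_limit \<eta> h + heun_noise_rate \<eta> h) / heun_square_rate \<eta> h"

lemma heun_admissible_contractions:
  assumes "heun_admissible \<eta> h"
  shows "\<bar>1 - h * heun_mean_rate \<eta> h\<bar> < 1" and "\<bar>1 - h * heun_square_rate \<eta> h\<bar> < 1"
proof -
  have "0 < 2 + \<eta>\<^sup>2" by (simp add: add_pos_nonneg)
  then have "0 < (2 + \<eta>\<^sup>2)\<^sup>2" by simp
  then have h: "0 < h" and small: "h * (2 + \<eta>\<^sup>2)\<^sup>2 < 8"
    using assms by (auto simp: heun_admissible_def pos_less_divide_eq)
  have "h * 4 \<le> h * (2 + \<eta>\<^sup>2)\<^sup>2"
    using power_mono[of 2 "2 + \<eta>\<^sup>2" 2] h by (intro mult_left_mono) auto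
  then have "h < 2" using small by linarith
  have "0 < heun_mean_rate \<eta> h" "heun_mean_rate \<eta> h \<le> 1"
    using small h by (simp_all add: heun_mean_rate_def mult.commute)
  then have "0 < h * heun_mean_rate \<eta> h" "h * heun_mean_rate \<eta> h \<le> h"
    using h by (simp_all add: mult_left_le)
  then show "\<bar>1 - h * heun_mean_rate \<eta> h\<bar> < 1"
    unfolding abs_less_iff using \<open>h < 2\<close> by linarith
  have square: "1 - h * heun_square_rate \<eta> h
        = 1 - h * (2 - \<eta>\<^sup>2) - (1/4) * h\<^sup>2 * ((2 + \<eta>\<^sup>2)\<^sup>2 - 12)
          + (1/4) * h ^ 3 * (\<eta> ^ 6 + 3 * \<eta> ^ 4 - 4) + (1/64) * h ^ 4 * (2 + \<eta>\<^sup>2) ^ 4"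
    unfolding heun_square_rate_def by (simp add: field_simps power2_eq_square; algebra)
  show "\<bar>1 - h * heun_square_rate \<eta> h\<bar> < 1"
    using assms unfolding heun_admissible_def square by simp
qed

lemma heun_mu2_tendsto:
  assumes adm: "heun_admissible \<eta> h" and iid: "iid_gaussian_increments M h dW"
  shows "heun_mu2 M \<eta> h x0 dW \<longlonglongrightarrow> heun_mu2_limit \<eta> h"
proof -
  interpret prob_space M using iid by (simp add: iid_gaussian_increments_def)
  have h: "0 < h" using adm by (simp add: heun_admissible_def)
  note contraction = heun_admissible_contractions[OF adm]
  have rates: "heun_mean_rate \<eta> h \<noteq> 0" "heun_square_rate \<eta> h \<noteq> 0"
    using contraction by auto
  have ind: "indep_vars (\<lambda>_. borel) dW UNIV"
    and D: "\<And>n. distributed M lborel (dW n) (normal_density 0 (sqrt h))"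
    using iid by (auto simp: iid_gaussian_increments_def)
  note recurrence = heun_moment_recurrences[OF ind D h, of \<eta> x0]
  define m1 where "m1 n = expectation (heun_iter \<eta> h x0 dW n)" for n
  have "m1 \<longlonglongrightarrow> (\<eta> * (2 + \<eta>\<^sup>2) * h\<^sup>2 / 8) / (1 - (1 - h * heun_mean_rate \<eta> h))"
    by (rule affine_recurrence_tendsto[OF contraction(1) tendsto_const]) (simp add: m1_def recurrence)
  moreover have "(\<eta> * (2 + \<eta>\<^sup>2) * h\<^sup>2 / 8) / (1 - (1 - h * heun_mean_rate \<eta> h)) = heun_mu1_limit \<eta> h"
    using h rates by (simp add: heun_mu1_limit_def power2_eq_square)
  ultimately have m1: "m1 \<longlonglongrightarrow> heun_mu1_limit \<eta> h" by simp
  have "heun_mu2 M \<eta> h x0 dW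
        \<longlonglongrightarrow> (h * heun_cross_rate \<eta> h * heun_mu1_limit \<eta> h + h * heun_noise_rate \<eta> h)
            / (1 - (1 - h * heun_square_rate \<eta> h))"
  proof (rule affine_recurrence_tendsto[OF contraction(2)])
    show "(\<lambda>n. h * heun_cross_rate \<eta> h * m1 n + h * heun_noise_rate \<eta> h)
          \<longlonglongrightarrow> h * heun_cross_rate \<eta> h * heun_mu1_limit \<eta> h + h * heun_noise_rate \<eta> h"
      by (intro tendsto_intros m1)
  qed (use recurrence h in \<open>simp add: heun_mu2_def m1_def\<close>)
  moreover have "(h * heun_cross_rate \<eta> h * heun_mu1_limit \<eta> h + h * heun_noise_rate \<eta> h)
                  / (1 - (1 - h * heun_square_rate \<eta> h)) = heun_mu2_limit \<eta> h"
    using h by (simp add: heun_mu2_limit_def mult.assoc flip: distrib_left)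
  ultimately show ?thesis by simp
qed

lemma heun_mu2_limit_bigo:
  assumes "\<eta>\<^sup>2 < 2"
  shows "(\<lambda>h. heun_mu2_limit \<eta> h - 1 / (2 - \<eta>\<^sup>2)) \<in> O[at_right 0](\<lambda>h. h)"
proof -
  have at0: "heun_mu2_limit \<eta> 0 = 1 / (2 - \<eta>\<^sup>2)"
    by (simp add: heun_mu2_limit_def heun_mu1_limit_def heun_noise_rate_def heun_square_rate_def)
  have "\<exists>D. (heun_mu2_limit \<eta> has_real_derivative D) (at 0)"
    using assms unfolding heun_mu2_limit_def[abs_def] heun_mu1_limit_def heun_mean_rate_def
      heun_square_rate_def heun_cross_rate_def heun_noise_rate_def
    by (intro exI) (rule derivative_eq_intros refl | simp)+
  then obtain D where "(heun_mu2_limit \<eta> has_real_derivative D) (at_right 0)"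
    using has_field_derivative_at_within by blast
  then have "((\<lambda>h. (heun_mu2_limit \<eta> h - 1 / (2 - \<eta>\<^sup>2)) / h) \<longlongrightarrow> D) (at_right 0)"
    by (simp add: has_field_derivative_iff at0)
  then show ?thesis
    by (rule bigoI_tendsto) (simp add: eventually_at_filter)
qed

theorem mainTheorem7:
  fixes \<eta> :: real
  assumes "\<eta>\<^sup>2 < 2"
  shows "\<exists>L :: real \<Rightarrow> real.
           (\<forall>h. heun_admissible \<eta> h \<longrightarrow>
              (\<forall>(M :: 'a measure) dW x0. iid_gaussian_increments M h dW \<longrightarrow>
                 (heun_mu2 M \<eta> h x0 dW \<longlonglongrightarrow> L h)))
         \<and> (\<lambda>h. L h - 1 / (2 - \<eta>\<^sup>2)) \<in> O[at_right 0](\<lambda>h. h)"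
  using heun_mu2_tendsto heun_mu2_limit_bigo[OF assms] by blast

end
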